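(* Let $F\neq\mathbb{C}$ be a local field of characteristic zero, with uniformizer $\varpi$ when $F$ is non-archimedean. For $\phi\in\mathcal{S}(F^2)$ define, for $a\in F^\times$, $$H(a)=\begin{cases}\sum_{b\in\mathbb{Z}}|\phi(a\varpi^b,\varpi^{-b})|, & F\ne\mathbb{R},\\ \int_{\mathbb{R}_+^\times}|\phi(at,t^{-1})|\,d^\times t, & F=\mathbb{R}.\end{cases}$$ Then there exist a finite index set $I$, Schwartz functions $A_i,B_i\in\mathcal{S}(F)$ ($i\in I$) and a constant $C>0$, depending on $\phi$, such that for all $a\in F^\times$ $$H(a)\le\sum_{i\in I}|A_i(a)|+\big|\log|a|\big|\sum_{i\in I}|B_i(a)|+C.$$ *)

theory Defs
  imports "HOL-Analysis.Analysis"
begin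

definition schwartz_R :: "(real \<Rightarrow> complex) \<Rightarrow> bool" where
  "schwartz_R f \<longleftrightarrow>
     (\<exists>D :: nat \<Rightarrow> real \<Rightarrow> complex.
        D 0 = f \<and>
        (\<forall>n x. (D n has_vector_derivative D (Suc n) x) (at x)) \<and>
        (\<forall>n k. \<exists>M. \<forall>x. \<bar>x\<bar> ^ k * norm (D n x) \<le> M))"

definition schwartz_R2 :: "(real \<times> real \<Rightarrow> complex) \<Rightarrow> bool" where
  "schwartz_R2 \<phi> \<longleftrightarrow>
     (\<exists>D :: nat \<Rightarrow> nat \<Rightarrow> real \<times> real \<Rightarrow> complex.
        D 0 0 = \<phi> \<and>
        (\<forall>i j. continuous_on UNIV (D i j)) \<and>
        (\<forall>i j x y. ((\<lambda>t. D i j (t, y)) has_vector_derivative D (Suc i) j (x, y)) (at x)) \<and>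
        (\<forall>i j x y. ((\<lambda>t. D i j (x, t)) has_vector_derivative D i (Suc j) (x, y)) (at y)) \<and>
        (\<forall>i j k l. \<exists>M. \<forall>x y. \<bar>x\<bar> ^ k * \<bar>y\<bar> ^ l * norm (D i j (x, y)) \<le> M))"

text \<open>H(a) = integral over R_+^x of |phi(a t, 1/t)| d^x t, with d^x t = dt / t.\<close>
definition H_R :: "(real \<times> real \<Rightarrow> complex) \<Rightarrow> real \<Rightarrow> ennreal" where
  "H_R \<phi> a = (\<integral>\<^sup>+ t \<in> {0<..}. ennreal (norm (\<phi> (a * t, 1 / t)) / t) \<partial>lborel)"

text \<open>A non-archimedean local field of characteristic zero: a field of characteristic 0
  with a normalized non-archimedean absolute value v, discretely valued with uniformizer
  \<open>\<pi>\<close>, complete, and with finite residue field of cardinality q, normalized so that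
  v \<pi> = 1/q.\<close>
definition nonarch_local_field :: "('a::field_char_0 \<Rightarrow> real) \<Rightarrow> 'a \<Rightarrow> bool" where
  "nonarch_local_field v \<pi> \<longleftrightarrow>
     (\<forall>x. 0 \<le> v x) \<and> (\<forall>x. v x = 0 \<longleftrightarrow> x = 0) \<and>
     (\<forall>x y. v (x * y) = v x * v y) \<and>
     (\<forall>x y. v (x + y) \<le> max (v x) (v y)) \<and>
     0 < v \<pi> \<and> v \<pi> < 1 \<and>
     (\<forall>x. x \<noteq> 0 \<longrightarrow> (\<exists>n::int. v x = v \<pi> powi n)) \<and>
     (\<forall>s :: nat \<Rightarrow> 'a. (\<forall>e>0. \<exists>N. \<forall>m\<ge>N. \<forall>n\<ge>N. v (s m - s n) < e) \<longrightarrow>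
          (\<exists>L. \<forall>e>0. \<exists>N. \<forall>n\<ge>N. v (s n - L) < e)) \<and>
     finite ((\<lambda>x. {y. v y \<le> 1 \<and> v (y - x) < 1}) ` {x. v x \<le> 1}) \<and>
     v \<pi> = 1 / real (card ((\<lambda>x. {y. v y \<le> 1 \<and> v (y - x) < 1}) ` {x. v x \<le> 1}))"

text \<open>Schwartz--Bruhat functions on F: locally constant with compact (= bounded) support.\<close>
definition nonarch_schwartz :: "('a::field_char_0 \<Rightarrow> real) \<Rightarrow> ('a \<Rightarrow> complex) \<Rightarrow> bool" where
  "nonarch_schwartz v f \<longleftrightarrow>
     (\<forall>x. \<exists>e>0. \<forall>y. v (y - x) < e \<longrightarrow> f y = f x) \<and>
     (\<exists>R. \<forall>x. R < v x \<longrightarrow> f x = 0)"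

definition nonarch_schwartz2 :: "('a::field_char_0 \<Rightarrow> real) \<Rightarrow> ('a \<times> 'a \<Rightarrow> complex) \<Rightarrow> bool" where
  "nonarch_schwartz2 v \<phi> \<longleftrightarrow>
     (\<forall>x y. \<exists>e>0. \<forall>x' y'. v (x' - x) < e \<and> v (y' - y) < e \<longrightarrow> \<phi> (x', y') = \<phi> (x, y)) \<and>
     (\<exists>R. \<forall>x y. R < max (v x) (v y) \<longrightarrow> \<phi> (x, y) = 0)"

definition H_na :: "'a::field_char_0 \<Rightarrow> ('a \<times> 'a \<Rightarrow> complex) \<Rightarrow> 'a \<Rightarrow> ennreal" where
  "H_na \<pi> \<phi> a = (\<integral>\<^sup>+ b. ennreal (norm (\<phi> (a * \<pi> powi b, \<pi> powi (- b)))) \<partial>count_space (UNIV :: int set))"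

end

theory Submission
  imports Defs "HOL-Computational_Algebra.Polynomial"
begin

text \<open>Real case. Along the hyperbola (a t, 1/t) the Schwartz bounds |\<phi>| \<le> N00,
  y^2 |\<phi>| \<le> N02 and x^2 |\<phi>| \<le> N20 give the majorant N02 on (0, 1], N00 / t on [1, 1/|a|] and
  N20 / (a^2 t^3) beyond for |\<phi>(a t, 1/t)| / t, so H(a) \<le> N02 + N20/2 + N00 log max(1, 1/|a|);
  the logarithm is absorbed by |log |a|| times a Gaussian.

  Non-archimedean case. \<phi> is locally constant with support in a box of radius |\<pi>|^-K, and such
  a box is compact (the residue field is finite and F is complete), so \<phi> is bounded by some M.
  If |a| = |\<pi>|^n, only the 2K + n + 1 indices -K - n \<le> b \<le> K contribute to H(a), and the part
  n M of the bound is |log |a|| times a multiple of the indicator of the unit disc.\<close>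

lemma power_div_fact_le_exp:
  fixes y :: real
  assumes "0 \<le> y"
  shows "y ^ m / fact m \<le> exp y"
proof -
  have "summable (\<lambda>n. inverse (fact n) * y ^ n)"
    using summable_exp_generic[of y] by (simp add: divide_inverse ac_simps)
  then have "inverse (fact m) * y ^ m \<le> (\<Sum>n. inverse (fact n) * y ^ n)"
    using assms by (intro sum_le_suminf[of _ "{m}", simplified]) auto
  then show ?thesis
    by (simp add: exp_def divide_inverse ac_simps)
qed

lemma abs_power_mult_exp_neg_square_le:
  fixes x :: real
  shows "\<bar>x\<bar> ^ m * exp (- x\<^sup>2) \<le> fact m + 1"
proof (cases "\<bar>x\<bar> \<le> 1")
  case True
  then have "\<bar>x\<bar> ^ m * exp (- x\<^sup>2) \<le> 1"
    by (intro mult_le_one power_le_one) auto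
  moreover have "(0::real) \<le> fact m"
    by simp
  ultimately show ?thesis
    by linarith
next
  case False
  have "\<bar>x\<bar> ^ m \<le> \<bar>x\<bar> ^ (2 * m)"
    using False by (intro power_increasing) auto
  also have "\<dots> = (x\<^sup>2) ^ m"
    by (simp add: power_mult power2_abs)
  also have "\<dots> \<le> fact m * exp (x\<^sup>2)"
    using power_div_fact_le_exp[of "x\<^sup>2" m] by (simp add: divide_le_eq mult.commute)
  finally have "\<bar>x\<bar> ^ m * exp (- x\<^sup>2) \<le> fact m"
    by (simp add: exp_minus field_simps)
  then show ?thesis
    by simp
qed

lemma poly_mult_exp_neg_square_bounded:
  fixes p :: "real poly"
  shows "\<exists>M. \<forall>x. \<bar>x\<bar> ^ k * \<bar>poly p x\<bar> * exp (- x\<^sup>2) \<le> M"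
proof (intro exI allI)
  fix x :: real
  have "\<bar>poly p x\<bar> \<le> (\<Sum>i\<le>degree p. \<bar>coeff p i\<bar> * \<bar>x\<bar> ^ i)"
    unfolding poly_altdef by (rule order_trans[OF sum_abs]) (simp add: abs_mult power_abs)
  then have "\<bar>x\<bar> ^ k * \<bar>poly p x\<bar> * exp (- x\<^sup>2)
      \<le> \<bar>x\<bar> ^ k * (\<Sum>i\<le>degree p. \<bar>coeff p i\<bar> * \<bar>x\<bar> ^ i) * exp (- x\<^sup>2)"
    by (intro mult_right_mono mult_left_mono) auto
  also have "\<dots> = (\<Sum>i\<le>degree p. \<bar>coeff p i\<bar> * (\<bar>x\<bar> ^ (i + k) * exp (- x\<^sup>2)))"
    by (simp add: sum_distrib_left sum_distrib_right power_add algebra_simps)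
  also have "\<dots> \<le> (\<Sum>i\<le>degree p. \<bar>coeff p i\<bar> * (fact (i + k) + 1))"
    by (intro sum_mono mult_left_mono abs_power_mult_exp_neg_square_le) auto
  finally show "\<bar>x\<bar> ^ k * \<bar>poly p x\<bar> * exp (- x\<^sup>2)
      \<le> (\<Sum>i\<le>degree p. \<bar>coeff p i\<bar> * (fact (i + k) + 1))" .
qed

lemma schwartz_R_gaussian: "schwartz_R (\<lambda>x. complex_of_real (c * exp (- x\<^sup>2)))"
proof -
  \<comment> \<open>The n-th derivative is P n x * exp (- x^2), where P (n + 1) = P n' - 2 x P n.\<close>
  define P where "P = rec_nat [:c:] (\<lambda>_ p. pderiv p - [:0, 2:] * p)"
  define D where "D n x = complex_of_real (poly (P n) x * exp (- x\<^sup>2))" for n x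
  have "(D n has_vector_derivative D (Suc n) x) (at x)" for n x
  proof -
    have "((\<lambda>x. poly (P n) x * exp (- x\<^sup>2)) has_real_derivative
        poly (pderiv (P n)) x * exp (- x\<^sup>2) + poly (P n) x * (exp (- x\<^sup>2) * (- (2 * x)))) (at x)"
      by (auto intro!: derivative_eq_intros poly_DERIV)
    also have "poly (pderiv (P n)) x * exp (- x\<^sup>2) + poly (P n) x * (exp (- x\<^sup>2) * (- (2 * x)))
        = poly (P (Suc n)) x * exp (- x\<^sup>2)"
      by (simp add: P_def algebra_simps)
    finally show ?thesis
      unfolding D_def by (rule has_vector_derivative_of_real)
  qed
  moreover have "\<exists>M. \<forall>x. \<bar>x\<bar> ^ k * norm (D n x) \<le> M" for n k
    using poly_mult_exp_neg_square_bounded[of k "P n"]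
    unfolding D_def norm_of_real by (simp add: abs_mult mult.assoc)
  moreover have "D 0 = (\<lambda>x. complex_of_real (c * exp (- x\<^sup>2)))"
    by (simp add: D_def P_def fun_eq_iff)
  ultimately show ?thesis
    unfolding schwartz_R_def by blast
qed

lemma schwartz_R_zero: "schwartz_R (\<lambda>x. 0)"
  unfolding schwartz_R_def by (rule exI[of _ "\<lambda>n x. 0"]) auto

definition hyperbola_majorant :: "real \<Rightarrow> real \<Rightarrow> real \<Rightarrow> real \<Rightarrow> real \<Rightarrow> real" where
  "hyperbola_majorant A B C T t =
    (if t \<in> {0..1} then A else 0) + (if t \<in> {1..T} then B / t else 0)
    + (if t \<in> {T..} then C * t powr (-3) else 0)"

lemma hyperbola_majorant_nonneg:
  assumes "0 \<le> A" "0 \<le> B" "0 \<le> C" "1 \<le> T"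
  shows "0 \<le> hyperbola_majorant A B C T t"
  using assms by (simp add: hyperbola_majorant_def)

lemma nn_integral_hyperbola_majorant:
  assumes "0 \<le> A" "0 \<le> B" "0 \<le> C" "1 \<le> T"
  shows "(\<integral>\<^sup>+ t. ennreal (hyperbola_majorant A B C T t) \<partial>lborel)
    = ennreal (A + B * ln T + C * (T powr (-2) / 2))"
proof -
  have "((\<lambda>t::real. if t \<in> {0..1} then A else 0) has_integral A) UNIV"
    unfolding has_integral_restrict_UNIV using has_integral_const_real[of A 0 1] by simp
  moreover have "((\<lambda>t. B / t) has_integral (B * ln T - B * ln 1)) {1..T}"
    using assms(4) by (intro fundamental_theorem_of_calculus)
      (auto intro!: derivative_eq_intros simp: field_simps
        simp flip: has_real_derivative_iff_has_vector_derivative)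
  then have "((\<lambda>t. if t \<in> {1..T} then B / t else 0) has_integral (B * ln T)) UNIV"
    unfolding has_integral_restrict_UNIV by simp
  moreover have "((\<lambda>t. t powr (-3)) has_integral (T powr (-2) / 2)) {T..}"
    using has_integral_powr_to_inf[of "-3" T] assms(4) by simp
  then have "((\<lambda>t. if t \<in> {T..} then C * t powr (-3) else 0) has_integral (C * (T powr (-2) / 2))) UNIV"
    unfolding has_integral_restrict_UNIV by (rule has_integral_mult_right)
  ultimately have "(hyperbola_majorant A B C T has_integral (A + B * ln T + C * (T powr (-2) / 2))) UNIV"
    unfolding hyperbola_majorant_def by (intro has_integral_add)
  then have "(\<integral>\<^sup>+ t. ennreal (hyperbola_majorant A B C T t) * indicator UNIV t \<partial>lborel)
      = ennreal (A + B * ln T + C * (T powr (-2) / 2))"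
    using assms by (intro nn_integral_has_integral_lebesgue') (auto intro: hyperbola_majorant_nonneg)
  then show ?thesis
    by simp
qed

lemma norm_hyperbola_div_le_majorant:
  fixes \<phi> :: "real \<times> real \<Rightarrow> complex"
  assumes t: "t > 0" and a: "a \<noteq> 0"
    and b00: "\<And>x y. norm (\<phi> (x, y)) \<le> N00"
    and b02: "\<And>x y. y\<^sup>2 * norm (\<phi> (x, y)) \<le> N02"
    and b20: "\<And>x y. x\<^sup>2 * norm (\<phi> (x, y)) \<le> N20"
  shows "norm (\<phi> (a * t, 1 / t)) / t \<le> hyperbola_majorant N02 N00 (N20 / a\<^sup>2) T t"
proof -
  let ?f = "norm (\<phi> (a * t, 1 / t))"
  let ?p1 = "if t \<in> {0..1} then N02 else 0"
  let ?p2 = "if t \<in> {1..T} then N00 / t else 0"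
  let ?p3 = "if t \<in> {T..} then N20 / a\<^sup>2 * t powr (-3) else 0"
  have "N00 \<ge> 0" "N02 \<ge> 0" "N20 \<ge> 0"
    using order_trans[OF norm_ge_zero b00] b02[of 0 0] b20[of 0 0] by simp_all
  then have nonneg: "0 \<le> ?p1" "0 \<le> ?p2" "0 \<le> ?p3"
    using t by simp_all
  have "(1 / t)\<^sup>2 * ?f \<le> N02"
    by (rule b02)
  then have "?f / t \<le> N02 * t"
    using t by (simp add: field_simps power2_eq_square)
  also have "\<dots> \<le> N02" if "t \<le> 1"
    using that \<open>N02 \<ge> 0\<close> by (simp add: mult_left_le)
  finally have low: "?f / t \<le> N02" if "t \<le> 1"
    using that by simp
  have mid: "?f / t \<le> N00 / t"
    using b00 t by (intro divide_right_mono) auto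
  have "(a * t)\<^sup>2 * ?f \<le> N20"
    by (rule b20)
  then have "?f \<le> N20 / (a * t)\<^sup>2"
    using t a by (simp add: pos_le_divide_eq mult.commute)
  then have "?f / t \<le> N20 / (a * t)\<^sup>2 / t"
    using t by (intro divide_right_mono) auto
  also have "\<dots> = N20 / a\<^sup>2 * t powr (-3)"
    using t by (simp add: powr_minus powr_realpow power_mult_distrib power3_eq_cube
        power2_eq_square divide_inverse)
  finally have high: "?f / t \<le> N20 / a\<^sup>2 * t powr (-3)" .
  consider "t \<le> 1" | "1 \<le> t" "t \<le> T" | "T \<le> t"
    by linarith
  then have "?f / t \<le> ?p1 + ?p2 + ?p3"
  proof cases
    case 1
    then have "?p1 = N02"
      using t by simp
    then show ?thesis
      using low[OF 1] nonneg by linarith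
  next
    case 2
    then have "?p2 = N00 / t"
      by simp
    then show ?thesis
      using mid nonneg by linarith
  next
    case 3
    then have "?p3 = N20 / a\<^sup>2 * t powr (-3)"
      by simp
    then show ?thesis
      using high nonneg by linarith
  qed
  then show ?thesis
    by (simp add: hyperbola_majorant_def)
qed

lemma H_R_le:
  fixes \<phi> :: "real \<times> real \<Rightarrow> complex"
  assumes a: "a \<noteq> 0"
    and b00: "\<And>x y. norm (\<phi> (x, y)) \<le> N00"
    and b02: "\<And>x y. y\<^sup>2 * norm (\<phi> (x, y)) \<le> N02"
    and b20: "\<And>x y. x\<^sup>2 * norm (\<phi> (x, y)) \<le> N20"
  shows "H_R \<phi> a \<le> ennreal (N02 + N20 / 2 + N00 * ln (max 1 (1 / \<bar>a\<bar>)))"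
proof -
  define T where "T = max 1 (1 / \<bar>a\<bar>)"
  have T: "T \<ge> 1" "T \<ge> 1 / \<bar>a\<bar>"
    by (simp_all add: T_def)
  have N: "N00 \<ge> 0" "N02 \<ge> 0" "N20 \<ge> 0"
    using order_trans[OF norm_ge_zero b00] b02[of 0 0] b20[of 0 0] by simp_all
  have "ennreal (norm (\<phi> (a * t, 1 / t)) / t) * indicator {0<..} t
      \<le> ennreal (hyperbola_majorant N02 N00 (N20 / a\<^sup>2) T t)" for t
    using norm_hyperbola_div_le_majorant[OF _ a b00 b02 b20, of t T]
    by (cases "t > 0") (simp_all add: ennreal_leI)
  then have "H_R \<phi> a \<le> (\<integral>\<^sup>+ t. ennreal (hyperbola_majorant N02 N00 (N20 / a\<^sup>2) T t) \<partial>lborel)"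
    unfolding H_R_def by (simp add: nn_integral_mono)
  also have "\<dots> = ennreal (N02 + N00 * ln T + N20 / a\<^sup>2 * (T powr (-2) / 2))"
    using N T by (intro nn_integral_hyperbola_majorant) auto
  also have "\<dots> \<le> ennreal (N02 + N20 / 2 + N00 * ln T)"
  proof (intro ennreal_leI)
    have "(1 / \<bar>a\<bar>)\<^sup>2 \<le> T\<^sup>2"
      using T by (intro power_mono) auto
    then have "T powr (-2) \<le> a\<^sup>2"
      using T(1) a by (simp add: powr_minus powr_realpow field_simps)
    then have "N20 / a\<^sup>2 * (T powr (-2) / 2) \<le> N20 / a\<^sup>2 * (a\<^sup>2 / 2)"
      using N by (intro mult_left_mono) auto
    then show "N02 + N00 * ln T + N20 / a\<^sup>2 * (T powr (-2) / 2) \<le> N02 + N20 / 2 + N00 * ln T"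
      using a by simp
  qed
  finally show ?thesis
    by (simp add: T_def)
qed

lemma ln_max_one_inverse_le:
  fixes a :: real
  assumes "a \<noteq> 0"
  shows "ln (max 1 (1 / \<bar>a\<bar>)) \<le> \<bar>ln \<bar>a\<bar>\<bar> * exp (1 - a\<^sup>2)"
proof (cases "\<bar>a\<bar> \<le> 1")
  case True
  then have "exp (1 - a\<^sup>2) \<ge> 1"
    by (simp add: abs_square_le_1)
  moreover have "ln (max 1 (1 / \<bar>a\<bar>)) = \<bar>ln \<bar>a\<bar>\<bar>"
    using True assms by (simp add: ln_div le_divide_eq_1)
  ultimately show ?thesis
    by (metis abs_ge_zero mult_left_mono mult.right_neutral)
qed (simp add: divide_le_eq_1)

lemma H_R_le_log_schwartz:
  assumes "schwartz_R2 \<phi>"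
  obtains B C where "schwartz_R B" "C > 0"
    "\<And>a. a \<noteq> 0 \<Longrightarrow> H_R \<phi> a \<le> ennreal (\<bar>ln \<bar>a\<bar>\<bar> * norm (B a) + C)"
proof -
  obtain D :: "nat \<Rightarrow> nat \<Rightarrow> real \<times> real \<Rightarrow> complex" where "D 0 0 = \<phi>"
    and D: "\<And>i j k l. \<exists>M. \<forall>x y. \<bar>x\<bar> ^ k * \<bar>y\<bar> ^ l * norm (D i j (x, y)) \<le> M"
    using assms unfolding schwartz_R2_def by blast
  obtain N00 N02 N20 where b00: "\<And>x y. norm (\<phi> (x, y)) \<le> N00"
    and b02: "\<And>x y. y\<^sup>2 * norm (\<phi> (x, y)) \<le> N02"
    and b20: "\<And>x y. x\<^sup>2 * norm (\<phi> (x, y)) \<le> N20"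
    using D[where i=0 and j=0 and k=0 and l=0] D[where i=0 and j=0 and k=0 and l=2]
      D[where i=0 and j=0 and k=2 and l=0] \<open>D 0 0 = \<phi>\<close> by (auto simp: power2_abs)
  have "N00 \<ge> 0" "N02 \<ge> 0" "N20 \<ge> 0"
    using order_trans[OF norm_ge_zero b00] b02[of 0 0] b20[of 0 0] by simp_all
  define B where "B x = complex_of_real (N00 * exp 1 * exp (- x\<^sup>2))" for x
  have "H_R \<phi> a \<le> ennreal (\<bar>ln \<bar>a\<bar>\<bar> * norm (B a) + (N02 + N20 / 2 + 1))" if "a \<noteq> 0" for a
  proof -
    have "norm (B a) = N00 * exp (1 - a\<^sup>2)"
      using \<open>N00 \<ge> 0\<close> unfolding B_def norm_of_real by (simp add: exp_diff exp_minus field_simps)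
    then have "N00 * ln (max 1 (1 / \<bar>a\<bar>)) \<le> \<bar>ln \<bar>a\<bar>\<bar> * norm (B a)"
      using mult_left_mono[OF ln_max_one_inverse_le[OF that] \<open>N00 \<ge> 0\<close>] by (simp add: ac_simps)
    then have "N02 + N20 / 2 + N00 * ln (max 1 (1 / \<bar>a\<bar>)) \<le> \<bar>ln \<bar>a\<bar>\<bar> * norm (B a) + (N02 + N20 / 2 + 1)"
      by linarith
    then show ?thesis
      using H_R_le[OF that b00 b02 b20] ennreal_leI order_trans by blast
  qed
  moreover have "schwartz_R B"
    unfolding B_def by (rule schwartz_R_gaussian)
  moreover have "N02 + N20 / 2 + 1 > 0"
    using \<open>N02 \<ge> 0\<close> \<open>N20 \<ge> 0\<close> by simp
  ultimately show ?thesis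
    using that by blast
qed

lemma power_int_decreasing_iff:
  fixes r :: "'a::linordered_field"
  assumes "0 < r" "r < 1"
  shows "r powi i \<le> r powi j \<longleftrightarrow> j \<le> i"
  using assms power_int_strict_decreasing[of i j r] power_int_decreasing[of j i r]
  by (cases "j \<le> i") auto

lemma power_int_strict_decreasing_iff:
  fixes r :: "'a::linordered_field"
  assumes "0 < r" "r < 1"
  shows "r powi i < r powi j \<longleftrightarrow> j < i"
  using power_int_decreasing_iff[OF assms, of j i] by linarith

lemma ln_power_int:
  fixes x :: real
  assumes "0 < x"
  shows "ln (x powi n) = of_int n * ln x"
  using powr_real_of_int'[of x n] assms by (metis ln_powr less_imp_le less_irrefl)

lemma power_int_shift_tendsto_zero:
  fixes r :: real
  assumes "0 < r" "r < 1"
  shows "(\<lambda>n. r powi (k + int n)) \<longlonglongrightarrow> 0"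
proof -
  have "(\<lambda>n. r powi k * r ^ n) \<longlonglongrightarrow> r powi k * 0"
    using assms by (intro tendsto_mult tendsto_const LIMSEQ_power_zero) simp
  moreover have "r powi (k + int n) = r powi k * r ^ n" for n
    using assms by (simp add: power_int_add)
  ultimately show ?thesis
    by simp
qed

lemma power_int_neg_unbounded:
  fixes r :: real
  assumes "0 < r" "r < 1"
  shows "\<exists>K::nat. R < r powi (- int K)"
proof -
  obtain K where "R < (1 / r) ^ K"
    using assms real_arch_pow[of "1 / r" R] by auto
  then have "R < r powi (- int K)"
    by (simp add: power_int_minus power_one_over inverse_eq_divide)
  then show ?thesis ..
qed

lemma nonarch_schwartz_zero: "nonarch_schwartz v (\<lambda>x. 0)"
  unfolding nonarch_schwartz_def by (auto intro: exI[of _ 1])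

locale nonarch_valuation =
  fixes v :: "'a::field_char_0 \<Rightarrow> real" and \<pi> :: 'a
  assumes v_nonneg: "0 \<le> v x"
    and v_eq_0_iff [simp]: "v x = 0 \<longleftrightarrow> x = 0"
    and v_mult: "v (x * y) = v x * v y"
    and v_add_le_max: "v (x + y) \<le> max (v x) (v y)"
    and v_pi: "0 < v \<pi>" "v \<pi> < 1"
    and v_discrete: "x \<noteq> 0 \<Longrightarrow> \<exists>n. v x = v \<pi> powi n"
    and v_complete: "\<forall>e>0. \<exists>N::nat. \<forall>m\<ge>N. \<forall>n\<ge>N. v (s m - s n) < e
      \<Longrightarrow> \<exists>L. \<forall>e>0. \<exists>N::nat. \<forall>n\<ge>N. v (s n - L) < e"
    and finite_residue_classes: "finite ((\<lambda>x. {y. v y \<le> 1 \<and> v (y - x) < 1}) ` {x. v x \<le> 1})"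

lemma nonarch_valuationI: "nonarch_local_field v \<pi> \<Longrightarrow> nonarch_valuation v \<pi>"
  unfolding nonarch_local_field_def nonarch_valuation_def by (elim conjE) (intro conjI; assumption)

context nonarch_valuation
begin

lemma v_zero [simp]: "v 0 = 0"
  by simp

lemma pi_nonzero: "\<pi> \<noteq> 0"
  using v_pi(1) by auto

lemma v_one [simp]: "v 1 = 1"
proof -
  have "v 1 * v 1 = v 1 * 1"
    by (metis mult.right_neutral v_mult)
  then show ?thesis
    by simp
qed

lemma v_minus [simp]: "v (- x) = v x"
proof -
  have "v (-1) * v (-1) = 1"
    by (metis minus_mult_minus mult_1 v_mult v_one)
  then have "(v (-1) - 1) * (v (-1) + 1) = 0"
    by (simp add: algebra_simps)
  then have "v (-1) = 1"
    using v_nonneg[of "-1"] by simp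
  then show ?thesis
    using v_mult[of "-1" x] by simp
qed

lemma v_diff_commute: "v (x - y) = v (y - x)"
  using v_minus[of "x - y"] by simp

lemma v_diff_le_max: "v (x - y) \<le> max (v (x - z)) (v (z - y))"
  using v_add_le_max[of "x - z" "z - y"] by simp

lemma v_eq_if_diff_less: "v (y - x) < v x \<Longrightarrow> v y = v x"
  using v_add_le_max[of "y - x" x] v_add_le_max[of "x - y" y] v_diff_commute[of x y]
  by (auto simp: max_def split: if_splits)

lemma v_inverse: "v (inverse x) = inverse (v x)"
proof (cases "x = 0")
  case False
  then have "v x * v (inverse x) = 1"
    by (simp flip: v_mult)
  then show ?thesis
    by (simp add: inverse_unique)
qed simp

lemma v_power_int: "v (x powi n) = v x powi n"
proof -
  have "v (y ^ m) = v y ^ m" for y m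
    by (induction m) (simp_all add: v_mult)
  then show ?thesis
    by (simp add: power_int_def v_inverse)
qed

lemma v_less_one_imp_le_pi: "v x < 1 \<Longrightarrow> v x \<le> v \<pi>"
proof (cases "x = 0")
  case False
  assume "v x < 1"
  obtain n where n: "v x = v \<pi> powi n"
    using v_discrete[OF False] ..
  with \<open>v x < 1\<close> have "0 < n"
    using power_int_strict_decreasing_iff[OF v_pi, of n 0] by simp
  then show ?thesis
    using n power_int_decreasing_iff[OF v_pi, of n 1] by simp
qed (simp add: v_pi less_imp_le)

definition disc :: "'a \<Rightarrow> int \<Rightarrow> 'a set" where
  "disc c k = {x. v (x - c) \<le> v \<pi> powi k}"

lemma center_in_disc: "c \<in> disc c k"
  using v_pi by (simp add: disc_def)

lemma disc_diff_le: "x \<in> disc c k \<Longrightarrow> y \<in> disc c k \<Longrightarrow> v (x - y) \<le> v \<pi> powi k"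
  using v_diff_le_max[of x y c] v_diff_commute[of y c] by (simp add: disc_def)

lemma disc_subset: "y \<in> disc c k \<Longrightarrow> k \<le> j \<Longrightarrow> disc y j \<subseteq> disc c k"
proof
  fix x assume "y \<in> disc c k" "k \<le> j" "x \<in> disc y j"
  then have "v (x - y) \<le> v \<pi> powi k"
    using power_int_decreasing_iff[OF v_pi, of j k] by (simp add: disc_def)
  then show "x \<in> disc c k"
    using \<open>y \<in> disc c k\<close> v_diff_le_max[of x c y] by (simp add: disc_def)
qed

text \<open>One subdisc per residue class: finiteness of the residue field replaces local compactness.\<close>
lemma disc_finite_cover:
  obtains S where "finite S" "S \<subseteq> disc c k" "disc c k \<subseteq> (\<Union>d\<in>S. disc d (k + 1))"
proof -
  define cls where "cls x = {y. v y \<le> 1 \<and> v (y - x) < 1}" for x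
  obtain R where R: "R \<subseteq> {x. v x \<le> 1}" "finite R" "cls ` {x. v x \<le> 1} = cls ` R"
    using finite_subset_image[OF finite_residue_classes[folded cls_def] order_refl] by blast
  have pk: "v (\<pi> powi k) = v \<pi> powi k" "v \<pi> powi k > 0" "\<pi> powi k \<noteq> 0"
    using v_pi by (simp_all add: v_power_int pi_nonzero)
  define S where "S = (\<lambda>u. c + \<pi> powi k * u) ` R"
  have "finite S"
    using R(2) by (simp add: S_def)
  moreover have "S \<subseteq> disc c k"
    using R(1) pk by (auto simp: S_def disc_def v_mult mult_left_le)
  moreover have "disc c k \<subseteq> (\<Union>d\<in>S. disc d (k + 1))"
  proof
    fix x assume "x \<in> disc c k"
    define u where "u = (x - c) / \<pi> powi k"
    have xu: "x - c = \<pi> powi k * u"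
      using pk by (simp add: u_def)
    then have "v u \<le> 1"
      using \<open>x \<in> disc c k\<close> pk by (simp add: disc_def v_mult mult_le_cancel_left1)
    then obtain \<rho> where "\<rho> \<in> R" "cls u = cls \<rho>"
      using R(3) by blast
    moreover have "u \<in> cls u"
      using \<open>v u \<le> 1\<close> by (simp add: cls_def)
    ultimately have "v (u - \<rho>) \<le> v \<pi>"
      by (simp add: cls_def v_less_one_imp_le_pi)
    moreover have "x - (c + \<pi> powi k * \<rho>) = \<pi> powi k * (u - \<rho>)"
      using xu by (simp add: algebra_simps)
    ultimately have "x \<in> disc (c + \<pi> powi k * \<rho>) (k + 1)"
      using pk v_pi by (simp add: disc_def v_mult power_int_add)
    then show "x \<in> (\<Union>d\<in>S. disc d (k + 1))"
      using \<open>\<rho> \<in> R\<close> by (auto simp: S_def)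
  qed
  ultimately show ?thesis
    by (rule that)
qed

lemma eventually_pi_power_int_less:
  "e > 0 \<Longrightarrow> \<exists>N. \<forall>n\<ge>N. v \<pi> powi (k + int n) < e"
  using order_tendstoD(2)[OF power_int_shift_tendsto_zero[OF v_pi]] by (simp add: eventually_sequentially)

lemma disc_chain_mem:
  assumes chain: "\<And>n. t (Suc n) \<in> disc (t n) (k + int n)"
  shows "n \<le> m \<Longrightarrow> t m \<in> disc (t n) (k + int n)"
proof (induction m rule: dec_induct)
  case base
  then show ?case by (rule center_in_disc)
next
  case (step m)
  have "disc (t m) (k + int m) \<subseteq> disc (t n) (k + int n)"
    using step by (intro disc_subset) auto
  then show ?case
    using chain by blast
qed

lemma disc_chain_limit:
  assumes chain: "\<And>n. t (Suc n) \<in> disc (t n) (k + int n)"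
  shows "\<exists>L. \<forall>n. L \<in> disc (t n) (k + int n)"
proof -
  have close: "v (t m - t n) \<le> v \<pi> powi (k + int (min m n))" for m n
    using disc_chain_mem[OF chain, of n m] disc_chain_mem[OF chain, of m n] v_diff_commute[of "t m"]
    by (cases "n \<le> m") (auto simp: disc_def min_def)
  have "\<forall>e>0. \<exists>N. \<forall>m\<ge>N. \<forall>n\<ge>N. v (t m - t n) < e"
  proof (intro allI impI)
    fix e :: real assume "e > 0"
    then obtain N where N: "\<forall>n\<ge>N. v \<pi> powi (k + int n) < e"
      using eventually_pi_power_int_less by blast
    have "v (t m - t n) < e" if "m \<ge> N" "n \<ge> N" for m n
      using close[of m n] N that by (cases "m \<le> n") auto
    then show "\<exists>N. \<forall>m\<ge>N. \<forall>n\<ge>N. v (t m - t n) < e"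
      by blast
  qed
  then obtain L where L: "\<forall>e>0. \<exists>N. \<forall>n\<ge>N. v (t n - L) < e"
    using v_complete by blast
  have "v (L - t n) \<le> v \<pi> powi (k + int n)" for n
  proof (rule ccontr)
    assume far: "\<not> ?thesis"
    have "0 < v \<pi> powi (k + int n)"
      using v_pi by simp
    with far have "v (L - t n) > 0"
      by linarith
    then obtain N where N: "\<forall>m\<ge>N. v (t m - L) < v (L - t n)"
      using L by blast
    define m where "m = max N n"
    have "v (L - t n) \<le> max (v (L - t m)) (v (t m - t n))"
      by (rule v_diff_le_max)
    moreover have "v (L - t m) < v (L - t n)"
      using N v_diff_commute[of L] by (simp add: m_def)
    moreover have "v (t m - t n) \<le> v \<pi> powi (k + int n)"
      using close[of m n] by (simp add: m_def)
    ultimately show False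
      using far by linarith
  qed
  then show ?thesis
    by (auto simp: disc_def)
qed

lemma unbounded_on_smaller_box:
  fixes f :: "'a \<times> 'a \<Rightarrow> 'b::metric_space"
  assumes "\<not> bounded (f ` (disc c1 k \<times> disc c2 k))"
  shows "\<exists>d1\<in>disc c1 k. \<exists>d2\<in>disc c2 k. \<not> bounded (f ` (disc d1 (k + 1) \<times> disc d2 (k + 1)))"
proof (rule ccontr)
  assume "\<not> ?thesis"
  then have bdd: "bounded (f ` (disc d1 (k + 1) \<times> disc d2 (k + 1)))"
    if "d1 \<in> disc c1 k" "d2 \<in> disc c2 k" for d1 d2
    using that by blast
  obtain S1 where S1: "finite S1" "S1 \<subseteq> disc c1 k" "disc c1 k \<subseteq> (\<Union>d\<in>S1. disc d (k + 1))"
    by (rule disc_finite_cover)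
  obtain S2 where S2: "finite S2" "S2 \<subseteq> disc c2 k" "disc c2 k \<subseteq> (\<Union>d\<in>S2. disc d (k + 1))"
    by (rule disc_finite_cover)
  define U where "U = (\<Union>d\<in>S1 \<times> S2. disc (fst d) (k + 1) \<times> disc (snd d) (k + 1))"
  have "(x, y) \<in> U" if x: "x \<in> disc c1 k" and y: "y \<in> disc c2 k" for x y
  proof -
    obtain d1 d2 where "d1 \<in> S1" "x \<in> disc d1 (k + 1)" "d2 \<in> S2" "y \<in> disc d2 (k + 1)"
      using x y S1(3) S2(3) by blast
    then show ?thesis
      unfolding U_def by (intro UN_I[of "(d1, d2)"]) simp_all
  qed
  then have "f ` (disc c1 k \<times> disc c2 k) \<subseteq> f ` U"
    by (intro image_mono) auto
  moreover have "bounded (f ` U)"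
    unfolding U_def image_UN using S1 S2
    by (intro bounded_UN finite_cartesian_product ballI) (auto simp: mem_Times_iff intro!: bdd)
  ultimately show False
    using assms bounded_subset by blast
qed

text \<open>If f were unbounded on a box, repeated subdivision would give nested boxes on which f is
  unbounded; f is locally constant at their common point, a contradiction.\<close>
lemma locally_constant_bounded_on_box:
  fixes f :: "'a \<times> 'a \<Rightarrow> 'b::metric_space"
  assumes loc_const: "\<forall>x y. \<exists>e>0. \<forall>x' y'. v (x' - x) < e \<and> v (y' - y) < e \<longrightarrow> f (x', y') = f (x, y)"
  shows "bounded (f ` (disc c1 k \<times> disc c2 k))"
proof (rule ccontr)
  define unbdd where
    "unbdd n p \<longleftrightarrow> \<not> bounded (f ` (disc (fst p) (k + int n) \<times> disc (snd p) (k + int n)))" for n p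
  assume "\<not> ?thesis"
  then have "unbdd 0 (c1, c2)"
    by (simp add: unbdd_def)
  moreover have "\<exists>q. unbdd (Suc n) q \<and> fst q \<in> disc (fst p) (k + int n) \<and> snd q \<in> disc (snd p) (k + int n)"
    if unb: "unbdd n p" for n p
  proof -
    obtain d1 d2 where "d1 \<in> disc (fst p) (k + int n)" "d2 \<in> disc (snd p) (k + int n)"
      "\<not> bounded (f ` (disc d1 (k + int n + 1) \<times> disc d2 (k + int n + 1)))"
      using unbounded_on_smaller_box unb unfolding unbdd_def by blast
    then show ?thesis
      by (intro exI[of _ "(d1, d2)"]) (simp add: unbdd_def ac_simps)
  qed
  ultimately obtain s where s: "\<And>n. unbdd n (s n)"
    "\<And>n. fst (s (Suc n)) \<in> disc (fst (s n)) (k + int n)"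
    "\<And>n. snd (s (Suc n)) \<in> disc (snd (s n)) (k + int n)"
    using dependent_nat_choice[of unbdd
        "\<lambda>n p q. fst q \<in> disc (fst p) (k + int n) \<and> snd q \<in> disc (snd p) (k + int n)"]
    by blast
  obtain L1 where L1: "\<And>n. L1 \<in> disc (fst (s n)) (k + int n)"
    using disc_chain_limit[OF s(2)] by blast
  obtain L2 where L2: "\<And>n. L2 \<in> disc (snd (s n)) (k + int n)"
    using disc_chain_limit[OF s(3)] by blast
  obtain e where "e > 0" and const: "\<forall>x' y'. v (x' - L1) < e \<and> v (y' - L2) < e \<longrightarrow> f (x', y') = f (L1, L2)"
    using loc_const by blast
  obtain N where N: "v \<pi> powi (k + int N) < e"
    using eventually_pi_power_int_less[OF \<open>e > 0\<close>] by blast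
  have "f (x, y) = f (L1, L2)"
    if "x \<in> disc (fst (s N)) (k + int N)" "y \<in> disc (snd (s N)) (k + int N)" for x y
  proof -
    have "v (x - L1) < e" "v (y - L2) < e"
      using disc_diff_le[OF that(1) L1] disc_diff_le[OF that(2) L2] N by (simp_all only: order.strict_trans1)
    then show ?thesis
      using const by blast
  qed
  then have "f ` (disc (fst (s N)) (k + int N) \<times> disc (snd (s N)) (k + int N)) \<subseteq> {f (L1, L2)}"
    by auto
  then have "bounded (f ` (disc (fst (s N)) (k + int N) \<times> disc (snd (s N)) (k + int N)))"
    using bounded_subset[of "{f (L1, L2)}"] by simp
  with s(1)[of N] show False
    by (simp add: unbdd_def)
qed

lemma nonarch_schwartz2_support:
  assumes "nonarch_schwartz2 v \<phi>"
  obtains K :: nat where "\<And>x y. \<phi> (x, y) \<noteq> 0 \<Longrightarrow> x \<in> disc 0 (- int K) \<and> y \<in> disc 0 (- int K)"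
proof -
  obtain R where R: "\<forall>x y. R < max (v x) (v y) \<longrightarrow> \<phi> (x, y) = 0"
    using assms unfolding nonarch_schwartz2_def by blast
  obtain K :: nat where K: "R < v \<pi> powi (- int K)"
    using power_int_neg_unbounded[OF v_pi] by blast
  have "x \<in> disc 0 (- int K) \<and> y \<in> disc 0 (- int K)" if "\<phi> (x, y) \<noteq> 0" for x y
  proof -
    have "max (v x) (v y) \<le> R"
      using R that by (meson not_le)
    then show ?thesis
      using K by (simp add: disc_def)
  qed
  then show ?thesis
    by (rule that)
qed

lemma nonarch_schwartz2_bounded:
  assumes "nonarch_schwartz2 v \<phi>"
  obtains M where "\<And>z. norm (\<phi> z) \<le> M"
proof -
  obtain K :: nat where K: "\<And>x y. \<phi> (x, y) \<noteq> 0 \<Longrightarrow> x \<in> disc 0 (- int K) \<and> y \<in> disc 0 (- int K)"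
    using nonarch_schwartz2_support[OF assms] by blast
  have "bounded (\<phi> ` (disc 0 (- int K) \<times> disc 0 (- int K)))"
    using assms unfolding nonarch_schwartz2_def by (intro locally_constant_bounded_on_box) blast
  then obtain M where M: "\<And>z. z \<in> disc 0 (- int K) \<times> disc 0 (- int K) \<Longrightarrow> norm (\<phi> z) \<le> M"
    by (auto simp: bounded_iff)
  have "norm (\<phi> (x, y)) \<le> max M 0" for x y
    using K[of x y] M[of "(x, y)"] by (cases "\<phi> (x, y) = 0") auto
  then show ?thesis
    by (metis that surj_pair)
qed

lemma H_na_le_card:
  assumes bound: "\<And>z. norm (\<phi> z) \<le> M"
    and support: "\<And>x y. \<phi> (x, y) \<noteq> 0 \<Longrightarrow> x \<in> disc 0 (- int K) \<and> y \<in> disc 0 (- int K)"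
    and a: "v a = v \<pi> powi n"
  shows "H_na \<pi> \<phi> a \<le> ennreal (M * real (nat (2 * int K + n + 1)))"
proof -
  have "M \<ge> 0"
    using order_trans[OF norm_ge_zero bound] .
  define S where "S = {- int K - n .. int K}"
  have "\<phi> (a * \<pi> powi b, \<pi> powi (- b)) = 0" if "b \<notin> S" for b
  proof (rule ccontr)
    assume "\<phi> (a * \<pi> powi b, \<pi> powi (- b)) \<noteq> 0"
    then have "v (a * \<pi> powi b) \<le> v \<pi> powi (- int K)" "v (\<pi> powi (- b)) \<le> v \<pi> powi (- int K)"
      using support by (simp_all add: disc_def)
    moreover have "v (a * \<pi> powi b) = v \<pi> powi (n + b)"
      using a by (simp add: v_mult v_power_int power_int_add pi_nonzero)
    ultimately have "v \<pi> powi (n + b) \<le> v \<pi> powi (- int K)" "v \<pi> powi (- b) \<le> v \<pi> powi (- int K)"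
      by (simp_all add: v_power_int)
    then show False
      using that power_int_decreasing_iff[OF v_pi] by (auto simp: S_def)
  qed
  then have "ennreal (norm (\<phi> (a * \<pi> powi b, \<pi> powi (- b)))) \<le> ennreal M * indicator S b" for b
    using bound by (cases "b \<in> S") (auto intro: ennreal_leI)
  then have "H_na \<pi> \<phi> a \<le> (\<integral>\<^sup>+ b. ennreal M * indicator S b \<partial>count_space UNIV)"
    unfolding H_na_def by (intro nn_integral_mono)
  also have "\<dots> = ennreal M * emeasure (count_space UNIV) S"
    by (rule nn_integral_cmult_indicator) simp
  also have "\<dots> = ennreal (M * real (nat (2 * int K + n + 1)))"
    using \<open>M \<ge> 0\<close> by (simp add: S_def emeasure_count_space_finite ennreal_mult
        ennreal_of_nat_eq_real_of_nat)
  finally show ?thesis .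
qed

lemma nonarch_schwartz_disc_indicator:
  assumes "r > 0"
  shows "nonarch_schwartz v (\<lambda>x. if v x \<le> r then c else 0)"
  unfolding nonarch_schwartz_def
proof (intro conjI allI)
  fix x
  show "\<exists>e>0. \<forall>y. v (y - x) < e \<longrightarrow> (if v y \<le> r then c else 0) = (if v x \<le> r then c else 0)"
  proof (cases "v x \<le> r")
    case True
    have "(if v y \<le> r then c else 0) = (if v x \<le> r then c else 0)" if "v (y - x) < r" for y
    proof -
      have "v y \<le> max (v (y - x)) (v x)"
        using v_add_le_max[of "y - x" x] by simp
      also have "\<dots> \<le> r"
        using that True by simp
      finally show ?thesis
        using True by simp
    qed
    with assms show ?thesis
      by blast
  next
    case False
    then have "0 < v x"
      using assms by linarith
    moreover have "(if v y \<le> r then c else 0) = (if v x \<le> r then c else 0)" if "v (y - x) < v x" for y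
      using v_eq_if_diff_less[OF that] by simp
    ultimately show ?thesis
      by blast
  qed
next
  show "\<exists>R. \<forall>x. R < v x \<longrightarrow> (if v x \<le> r then c else 0) = 0"
    by (intro exI[of _ r]) simp
qed

lemma card_terms_le_log:
  assumes "M \<ge> 0" and n: "v a = v \<pi> powi n"
  shows "M * real (nat (2 * int K + n + 1))
    \<le> \<bar>ln (v a)\<bar> * (if v a \<le> 1 then M / - ln (v \<pi>) else 0) + M * (2 * real K + 1)"
proof (cases "0 \<le> n")
  case True
  have "ln (v \<pi>) < 0"
    using v_pi by simp
  have "v a \<le> 1"
    using True n power_int_decreasing_iff[OF v_pi, of n 0] by simp
  moreover have "\<bar>ln (v a)\<bar> = of_int n * - ln (v \<pi>)"
    using True \<open>ln (v \<pi>) < 0\<close> by (simp add: n ln_power_int[OF v_pi(1)] abs_mult)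
  ultimately have "\<bar>ln (v a)\<bar> * (if v a \<le> 1 then M / - ln (v \<pi>) else 0) = M * of_int n"
    using \<open>ln (v \<pi>) < 0\<close> by simp
  moreover have "real (nat (2 * int K + n + 1)) = 2 * real K + of_int n + 1"
    using True by simp
  ultimately show ?thesis
    by (simp add: algebra_simps)
next
  case False
  then have "nat (2 * int K + n + 1) \<le> 2 * K + 1"
    by arith
  then have "real (nat (2 * int K + n + 1)) \<le> 2 * real K + 1"
    using of_nat_mono by fastforce
  then have "M * real (nat (2 * int K + n + 1)) \<le> M * (2 * real K + 1)"
    using \<open>M \<ge> 0\<close> by (rule mult_left_mono)
  moreover have "0 \<le> \<bar>ln (v a)\<bar> * (if v a \<le> 1 then M / - ln (v \<pi>) else 0)"
    using \<open>M \<ge> 0\<close> v_pi by (simp add: divide_nonneg_neg)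
  ultimately show ?thesis
    by linarith
qed

lemma H_na_le_log_schwartz:
  assumes "nonarch_schwartz2 v \<phi>"
  obtains B C where "nonarch_schwartz v B" "C > 0"
    "\<And>a. a \<noteq> 0 \<Longrightarrow> H_na \<pi> \<phi> a \<le> ennreal (\<bar>ln (v a)\<bar> * norm (B a) + C)"
proof -
  obtain M where M: "\<And>z. norm (\<phi> z) \<le> M"
    using nonarch_schwartz2_bounded[OF assms] by blast
  obtain K :: nat where K: "\<And>x y. \<phi> (x, y) \<noteq> 0 \<Longrightarrow> x \<in> disc 0 (- int K) \<and> y \<in> disc 0 (- int K)"
    using nonarch_schwartz2_support[OF assms] by blast
  have "M \<ge> 0"
    using order_trans[OF norm_ge_zero M] .
  define c where "c = M / - ln (v \<pi>)"
  have "c \<ge> 0"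
    unfolding c_def using \<open>M \<ge> 0\<close> v_pi by (simp add: divide_nonneg_neg)
  define B where "B x = (if v x \<le> 1 then complex_of_real c else 0)" for x
  define C where "C = M * (2 * real K + 1) + 1"
  have "H_na \<pi> \<phi> a \<le> ennreal (\<bar>ln (v a)\<bar> * norm (B a) + C)" if "a \<noteq> 0" for a
  proof -
    obtain n where n: "v a = v \<pi> powi n"
      using v_discrete \<open>a \<noteq> 0\<close> by blast
    have B_a: "norm (B a) = (if v a \<le> 1 then c else 0)"
      using \<open>c \<ge> 0\<close> by (simp add: B_def)
    have "M * real (nat (2 * int K + n + 1)) \<le> \<bar>ln (v a)\<bar> * norm (B a) + C"
      using card_terms_le_log[OF \<open>M \<ge> 0\<close> n, of K, folded c_def, folded B_a] unfolding C_def by linarith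
    then have "ennreal (M * real (nat (2 * int K + n + 1))) \<le> ennreal (\<bar>ln (v a)\<bar> * norm (B a) + C)"
      by (rule ennreal_leI)
    with H_na_le_card[OF M K n] show ?thesis
      by (rule order_trans)
  qed
  moreover have "nonarch_schwartz v B"
    unfolding B_def by (rule nonarch_schwartz_disc_indicator) simp
  moreover have "C > 0"
    using mult_nonneg_nonneg[OF \<open>M \<ge> 0\<close>, of "2 * real K + 1"] by (simp add: C_def)
  ultimately show ?thesis
    using that by blast
qed

end

lemma singleton_family_bound:
  fixes H :: "'a \<Rightarrow> ennreal" and L :: "'a \<Rightarrow> real" and B :: "'a \<Rightarrow> complex"
  assumes "S (\<lambda>_. 0)" "S B" "C > 0" "\<And>a. P a \<Longrightarrow> H a \<le> ennreal (L a * norm (B a) + C)"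
  shows "\<exists>I :: nat set. \<exists>A B :: nat \<Rightarrow> 'a \<Rightarrow> complex. \<exists>C :: real.
    finite I \<and> (\<forall>i\<in>I. S (A i) \<and> S (B i)) \<and> C > 0 \<and>
    (\<forall>a. P a \<longrightarrow> H a \<le> ennreal ((\<Sum>i\<in>I. norm (A i a)) + L a * (\<Sum>i\<in>I. norm (B i a)) + C))"
  using assms by (intro exI[of _ "{0}"] exI[of _ "\<lambda>_ _. 0"] exI[of _ "\<lambda>_. B"] exI[of _ C]) auto

theorem lemma4p3:
  fixes v :: "'a::field_char_0 \<Rightarrow> real" and \<pi> :: 'a
  shows
  "(\<forall>\<phi>. schwartz_R2 \<phi> \<longrightarrow>
      (\<exists>I :: nat set. \<exists>A B :: nat \<Rightarrow> real \<Rightarrow> complex. \<exists>C :: real.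
         finite I \<and> (\<forall>i\<in>I. schwartz_R (A i) \<and> schwartz_R (B i)) \<and> C > 0 \<and>
         (\<forall>a::real. a \<noteq> 0 \<longrightarrow>
            H_R \<phi> a \<le> ennreal ((\<Sum>i\<in>I. norm (A i a))
                                 + \<bar>ln \<bar>a\<bar>\<bar> * (\<Sum>i\<in>I. norm (B i a)) + C))))
   \<and>
   (nonarch_local_field v \<pi> \<longrightarrow>
    (\<forall>\<phi>. nonarch_schwartz2 v \<phi> \<longrightarrow>
      (\<exists>I :: nat set. \<exists>A B :: nat \<Rightarrow> 'a \<Rightarrow> complex. \<exists>C :: real.
         finite I \<and> (\<forall>i\<in>I. nonarch_schwartz v (A i) \<and> nonarch_schwartz v (B i)) \<and> C > 0 \<and>
         (\<forall>a::'a. a \<noteq> 0 \<longrightarrow>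
            H_na \<pi> \<phi> a \<le> ennreal ((\<Sum>i\<in>I. norm (A i a))
                                   + \<bar>ln (v a)\<bar> * (\<Sum>i\<in>I. norm (B i a)) + C)))))"
  apply (intro conjI allI impI)
   apply (erule H_R_le_log_schwartz)
   apply (rule singleton_family_bound[where S = schwartz_R, OF schwartz_R_zero]; assumption)
  apply (erule nonarch_valuation.H_na_le_log_schwartz[OF nonarch_valuationI], assumption)
  apply (rule singleton_family_bound[where S = "nonarch_schwartz v", OF nonarch_schwartz_zero]; assumption)
  done

end
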